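(* Let $s\ge1$, $\theta\in\{0,1\}^s$, and suppose $f\in C^{|\theta|+1}(\mathbb{R}^s)$. Then for every $\alpha\in\mathbb{Z}^s$, $$\lim_{n\to\infty}\left|(-1)^{|\theta|}\,2^{(n+2)|\theta|+ns/2}\,d_{\theta,\alpha}^n(f)-\frac{D^\theta f\left(x_\alpha^n\right)}{\theta!}\right|=0.$$
   Context: Univariate Haar functions: $\psi_0:=\chi_{[0,1]}$ and $\psi_1:=\chi_{[0,\frac12]}-\chi_{[\frac12,1]}$. For $\theta\in\{0,1\}^s$ and $x\in\mathbb{R}^s$, $\psi_\theta(x):=\prod_{j=1}^s\psi_{\theta_j}(x_j)$. For $n\in\mathbb{N}_0$, $\alpha\in\mathbb{Z}^s$ the Haar coefficients are $d_{\theta,\alpha}^n(f):=2^{ns/2}\int_{\mathbb{R}^s}f(t)\,\psi_\theta(2^nt-\alpha)\,dt$. Let $\epsilon:=(1,\dots,1)\in\mathbb{Z}^s$ and $x_\alpha^n:=2^{-n}(\alpha+\frac12\epsilon)$. Multi-index notation: $|\theta|=\sum_j\theta_j$, $\theta!=\prod_j\theta_j!$, $D^\theta=\partial^{|\theta|}/\partial x_1^{\theta_1}\cdots\partial x_s^{\theta_s}$. *)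

theory Defs
  imports "HOL-Analysis.Analysis"
begin

definition partial_deriv :: "'n::finite \<Rightarrow> (real^'n \<Rightarrow> real) \<Rightarrow> real^'n \<Rightarrow> real" where
  "partial_deriv i f x = deriv (\<lambda>t. f (x + t *\<^sub>R axis i 1)) 0"

fun Ck :: "nat \<Rightarrow> (real^'n::finite \<Rightarrow> real) \<Rightarrow> bool" where
  "Ck 0 f = continuous_on UNIV f"
| "Ck (Suc k) f = (continuous_on UNIV f \<and>
      (\<forall>i x. (\<lambda>t. f (x + t *\<^sub>R axis i 1)) differentiable (at 0)) \<and>
      (\<forall>i. Ck k (partial_deriv i f)))"

text \<open>D^theta f for theta in {0,1}^s: differentiate once in each coordinate j with theta j = 1
  (in a fixed enumeration order of these coordinates; for C^{|theta|} functions the order is irrelevant).\<close>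
definition D_theta :: "('n::finite \<Rightarrow> nat) \<Rightarrow> (real^'n \<Rightarrow> real) \<Rightarrow> real^'n \<Rightarrow> real" where
  "D_theta \<theta> f = foldr partial_deriv (SOME xs. distinct xs \<and> set xs = {j. \<theta> j = 1}) f"

definition haar1 :: "nat \<Rightarrow> real \<Rightarrow> real" where
  "haar1 e x = (if e = 0 then indicator {0..1} x
                else indicator {0..1/2} x - indicator {1/2..1} x)"

definition haar :: "('n::finite \<Rightarrow> nat) \<Rightarrow> real^'n \<Rightarrow> real" where
  "haar \<theta> x = (\<Prod>j\<in>UNIV. haar1 (\<theta> j) (x $ j))"

definition haar_coeff :: "nat \<Rightarrow> ('n::finite \<Rightarrow> nat) \<Rightarrow> ('n \<Rightarrow> int) \<Rightarrow> (real^'n \<Rightarrow> real) \<Rightarrow> real" where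
  "haar_coeff n \<theta> \<alpha> f = 2 powr (real n * real CARD('n) / 2) *
     integral UNIV (\<lambda>t. f t * haar \<theta> (\<chi> j. 2 ^ n * t $ j - of_int (\<alpha> j)))"

definition grid_pt :: "nat \<Rightarrow> ('n::finite \<Rightarrow> int) \<Rightarrow> real^'n" where
  "grid_pt n \<alpha> = (\<chi> j. (of_int (\<alpha> j) + 1/2) / 2 ^ n)"

end

theory Submission
  imports Defs
begin

(* Write y = 2^n t - alpha.  Each factor psi_1(y_j) is chi(y_j) - chi(y_j - 1/2) with
   chi the indicator of [0, 1/2], so psi_theta(2^n t - alpha) is an alternating sum of the
   indicators of the 2^|theta| translates, by steps h = 2^-(n+1) in the directions j with
   theta_j = 1, of a single cell of volume 2^-(|theta| + ns).  Hence d^n is 2^(ns/2) times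
   the integral over that cell of the iterated difference of f with step h, and by the mean
   value theorem that difference is (-h)^|theta| D^theta f(xi) with |xi - t| <= |theta| h.
   After normalisation the quantity is thus a cell average of D^theta f at points within
   O(2^-n) of x_alpha^n; as alpha is fixed, all these points tend to the origin, so both
   terms converge to D^theta f(0) by continuity. *)

lemma Ck_imp_continuous_on: "Ck m g \<Longrightarrow> continuous_on UNIV g"
  by (cases m) auto

lemma Ck_foldr_partial_deriv:
  "Ck m f \<Longrightarrow> length xs \<le> m \<Longrightarrow> Ck (m - length xs) (foldr partial_deriv xs f)"
proof (induction xs)
  case (Cons i xs)
  then have "Ck (Suc (m - length (i # xs))) (foldr partial_deriv xs f)"
    by (simp add: Suc_diff_Suc)
  then show ?case by simp
qed simp

lemma continuous_on_foldr_partial_deriv: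
  "Ck m f \<Longrightarrow> length xs \<le> m \<Longrightarrow> continuous_on UNIV (foldr partial_deriv xs f)"
  by (rule Ck_imp_continuous_on[OF Ck_foldr_partial_deriv])

lemma differentiable_foldr_partial_deriv:
  assumes "Ck m f" "length xs < m"
  shows "(\<lambda>s. foldr partial_deriv xs f (x + s *\<^sub>R axis i 1)) differentiable (at 0)"
proof -
  have "Ck (Suc (m - Suc (length xs))) (foldr partial_deriv xs f)"
    using Ck_foldr_partial_deriv[OF assms(1)] assms(2) by (simp add: Suc_diff_Suc)
  then show ?thesis by simp
qed

lemma has_real_derivative_partial_deriv:
  assumes "\<And>x. (\<lambda>s. g (x + s *\<^sub>R axis i 1)) differentiable (at 0)"
  shows "((\<lambda>s. g (x + s *\<^sub>R axis i 1)) has_real_derivative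
           partial_deriv i g (x + \<tau> *\<^sub>R axis i 1)) (at \<tau>)"
proof -
  have "((\<lambda>s. g ((x + \<tau> *\<^sub>R axis i 1) + s *\<^sub>R axis i 1)) has_real_derivative
      partial_deriv i g (x + \<tau> *\<^sub>R axis i 1)) (at 0)"
    unfolding partial_deriv_def using assms DERIV_deriv_iff_real_differentiable by blast
  moreover have "(\<lambda>s. g ((x + \<tau> *\<^sub>R axis i 1) + s *\<^sub>R axis i 1))
      = (\<lambda>s. g (x + (s + \<tau>) *\<^sub>R axis i 1))"
    by (simp add: algebra_simps scaleR_add_left)
  ultimately show ?thesis
    using DERIV_shift[where f = "\<lambda>s. g (x + s *\<^sub>R axis i 1)" and x = 0 and z = \<tau>]
    by simp
qed

lemma partial_deriv_mean_value:
  assumes "\<And>x. (\<lambda>s. g (x + s *\<^sub>R axis i 1)) differentiable (at 0)" "h > 0"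
  obtains z where "0 < z" "z < h"
    "g x - g (x + h *\<^sub>R axis i 1) = - h * partial_deriv i g (x + z *\<^sub>R axis i 1)"
  using MVT2[OF assms(2) has_real_derivative_partial_deriv[OF assms(1)], of x] by force

definition diff_shift :: "real^'n::finite \<Rightarrow> (real^'n \<Rightarrow> real) \<Rightarrow> real^'n \<Rightarrow> real" where
  "diff_shift c g x = g x - g (x + c)"

lemma continuous_on_diff_shift:
  assumes "continuous_on UNIV g"
  shows "continuous_on UNIV (diff_shift c g)"
proof -
  have "continuous_on UNIV (\<lambda>x. g (x + c))"
    by (rule continuous_on_compose2[OF assms]) (auto intro: continuous_intros)
  with assms show ?thesis
    unfolding diff_shift_def by (rule continuous_on_diff)
qed

lemma partial_deriv_diff_shift:
  assumes "\<And>x. (\<lambda>s. g (x + s *\<^sub>R axis i 1)) differentiable (at 0)"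
  shows "partial_deriv i (diff_shift c g) = diff_shift c (partial_deriv i g)"
proof
  fix x
  have "(\<lambda>s. diff_shift c g (x + s *\<^sub>R axis i 1)) =
      (\<lambda>s. g (x + s *\<^sub>R axis i 1) - g ((x + c) + s *\<^sub>R axis i 1))"
    by (simp add: diff_shift_def algebra_simps)
  then have "((\<lambda>s. diff_shift c g (x + s *\<^sub>R axis i 1)) has_real_derivative
      diff_shift c (partial_deriv i g) x) (at 0)"
    using DERIV_diff[OF has_real_derivative_partial_deriv[OF assms, of x 0]
        has_real_derivative_partial_deriv[OF assms, of "x + c" 0]]
    by (simp add: diff_shift_def)
  then show "partial_deriv i (diff_shift c g) x = diff_shift c (partial_deriv i g) x"
    unfolding partial_deriv_def by (rule DERIV_imp_deriv)
qed

lemma Ck_diff_shift: "Ck m g \<Longrightarrow> Ck m (diff_shift c g)"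
proof (induction m arbitrary: g)
  case 0
  then show ?case by (simp add: continuous_on_diff_shift)
next
  case (Suc m)
  then have dg: "\<And>i x. (\<lambda>s. g (x + s *\<^sub>R axis i 1)) differentiable (at 0)" by simp
  have "(\<lambda>s. diff_shift c g (x + s *\<^sub>R axis i 1)) differentiable (at 0)" for i x
    using differentiable_diff[OF dg[of x i] dg[of "x + c" i]]
    by (simp add: diff_shift_def algebra_simps)
  then show ?case
    using Suc by (simp add: continuous_on_diff_shift partial_deriv_diff_shift[OF dg])
qed

lemma foldr_partial_deriv_diff_shift:
  "Ck m g \<Longrightarrow> length xs \<le> m \<Longrightarrow>
    foldr partial_deriv xs (diff_shift c g) = diff_shift c (foldr partial_deriv xs g)"
proof (induction xs)
  case (Cons i xs)
  then show ?case
    using differentiable_foldr_partial_deriv[OF Cons.prems(1)]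
    by (simp add: partial_deriv_diff_shift)
qed simp

(* The sign convention f x - f (x + h e_j) mirrors psi_1, which is +1 on the left half;
   it is the source of the factor (-1)^|theta| in the theorem. *)
primrec iter_diff :: "real \<Rightarrow> 'n::finite list \<Rightarrow> (real^'n \<Rightarrow> real) \<Rightarrow> real^'n \<Rightarrow> real" where
  "iter_diff h [] f = f"
| "iter_diff h (j # xs) f = iter_diff h xs (diff_shift (h *\<^sub>R axis j 1) f)"

lemma continuous_on_iter_diff:
  "continuous_on UNIV f \<Longrightarrow> continuous_on UNIV (iter_diff h xs f)"
  by (induction xs arbitrary: f) (simp_all add: continuous_on_diff_shift)

lemma iter_diff_mean_value:
  assumes "h > 0"
  shows "Ck m f \<Longrightarrow> length xs \<le> m \<Longrightarrow> \<exists>\<xi>. norm (\<xi> - t) \<le> real (length xs) * h \<and>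
      iter_diff h xs f t = (-h) ^ length xs * foldr partial_deriv xs f \<xi>"
proof (induction xs arbitrary: f t)
  case Nil
  then show ?case by auto
next
  case (Cons j xs)
  define e where "e = axis j (1::real)"
  define F where "F = foldr partial_deriv xs f"
  obtain \<xi> where \<xi>: "norm (\<xi> - t) \<le> real (length xs) * h"
    and eq: "iter_diff h xs (diff_shift (h *\<^sub>R e) f) t
               = (-h) ^ length xs * foldr partial_deriv xs (diff_shift (h *\<^sub>R e) f) \<xi>"
    using Cons.IH[OF Ck_diff_shift[OF Cons.prems(1)]] Cons.prems(2) by fastforce
  obtain z where z: "0 < z" "z < h" and mvt: "F \<xi> - F (\<xi> + h *\<^sub>R e) = - h * partial_deriv j F (\<xi> + z *\<^sub>R e)"
    using partial_deriv_mean_value[OF differentiable_foldr_partial_deriv[OF Cons.prems(1)] assms]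
      Cons.prems(2) unfolding F_def e_def by (metis Suc_le_lessD length_Cons)
  have "norm (\<xi> + z *\<^sub>R e - t) \<le> norm (\<xi> - t) + norm (z *\<^sub>R e)"
    using norm_triangle_ineq[of "\<xi> - t" "z *\<^sub>R e"] by (simp add: algebra_simps)
  also have "\<dots> \<le> real (length (j # xs)) * h"
    using \<xi> z by (simp add: e_def algebra_simps)
  finally have "norm (\<xi> + z *\<^sub>R e - t) \<le> real (length (j # xs)) * h" .
  moreover have "iter_diff h (j # xs) f t = (-h) ^ length (j # xs) * foldr partial_deriv (j # xs) f (\<xi> + z *\<^sub>R e)"
    using eq mvt foldr_partial_deriv_diff_shift[OF Cons.prems(1)] Cons.prems(2)
    by (simp add: F_def e_def diff_shift_def)
  ultimately show ?case by blast
qed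

definition shift_vec :: "real \<Rightarrow> 'n set \<Rightarrow> real^'n::finite" where
  "shift_vec h S = (\<chi> i. if i \<in> S then h else 0)"

lemma shift_vec_insert: "j \<notin> S \<Longrightarrow> shift_vec h (insert j S) = shift_vec h S + h *\<^sub>R axis j 1"
  unfolding shift_vec_def by (vector axis_def)

lemma sum_Pow_insert:
  assumes "finite A" "j \<notin> A"
  shows "(\<Sum>S\<in>Pow (insert j A). g S) = (\<Sum>S\<in>Pow A. g S) + (\<Sum>S\<in>Pow A. g (insert j S))"
proof -
  have "inj_on (insert j) (Pow A)"
    using assms(2) by (auto intro!: inj_onI)
  moreover have "Pow A \<inter> insert j ` Pow A = {}"
    using assms(2) by auto
  ultimately show ?thesis
    using assms(1) by (simp add: Pow_insert sum.union_disjoint sum.reindex)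
qed

lemma iter_diff_eq_sum:
  "distinct xs \<Longrightarrow> iter_diff h xs f t = (\<Sum>S\<in>Pow (set xs). (-1) ^ card S * f (t + shift_vec h S))"
proof (induction xs arbitrary: f)
  case Nil
  then show ?case by (simp add: shift_vec_def zero_vec_def[symmetric])
next
  case (Cons j xs)
  have j: "j \<notin> set xs" and "distinct xs" using Cons.prems by auto
  have "iter_diff h (j # xs) f t =
      (\<Sum>S\<in>Pow (set xs). (-1) ^ card S * f (t + shift_vec h S)
                        - (-1) ^ card S * f (t + shift_vec h S + h *\<^sub>R axis j 1))"
    using Cons.IH[OF \<open>distinct xs\<close>] by (simp add: diff_shift_def algebra_simps)
  also have "\<dots> = (\<Sum>S\<in>Pow (set xs). (-1) ^ card S * f (t + shift_vec h S))
      + (\<Sum>S\<in>Pow (set xs). (-1) ^ card (insert j S) * f (t + shift_vec h (insert j S)))"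
  proof -
    have "(-1) ^ card (insert j S) * f (t + shift_vec h (insert j S))
        = - ((-1) ^ card S * f (t + shift_vec h S + h *\<^sub>R axis j 1))" if "S \<subseteq> set xs" for S
    proof -
      have "j \<notin> S" "finite S" using that j finite_subset by auto
      then show ?thesis by (simp add: shift_vec_insert add.assoc)
    qed
    then show ?thesis by (simp add: sum_subtractf sum_negf)
  qed
  also have "\<dots> = (\<Sum>S\<in>Pow (set (j # xs)). (-1) ^ card S * f (t + shift_vec h S))"
    by (simp only: list.set(2) sum_Pow_insert[OF finite_set j])
  finally show ?case .
qed

(* The part of the dyadic cube 2^-n (alpha + [0,1]^s) on which every factor psi_1 is
   positive. *)
definition haar_cell :: "nat \<Rightarrow> ('n::finite \<Rightarrow> nat) \<Rightarrow> ('n \<Rightarrow> int) \<Rightarrow> (real^'n) set" where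
  "haar_cell n \<theta> \<alpha> = cbox (\<chi> j. of_int (\<alpha> j) / 2 ^ n)
                          (\<chi> j. (of_int (\<alpha> j) + (if \<theta> j = 1 then 1/2 else 1)) / 2 ^ n)"

lemma indicator_cbox_cart:
  fixes a b x :: "real^'n::finite"
  shows "indicator (cbox a b) x = (\<Prod>j\<in>UNIV. indicator {a $ j..b $ j} (x $ j) :: real)"
  by (auto simp: mem_box_cart indicator_def)

lemma prod_nested_if:
  fixes p q r :: "'a::finite \<Rightarrow> 'b::comm_monoid_mult"
  assumes "S \<subseteq> T"
  shows "(\<Prod>j\<in>UNIV. if j \<in> S then q j else if j \<in> T then p j else r j)
       = prod q S * prod p (T - S) * prod r (- T)"
proof -
  have "-S \<inter> T = T - S" "-S \<inter> -T = -T" using assms by auto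
  then show ?thesis by (simp add: prod.If_cases Int_def mult.assoc)
qed

lemma haar_scaled_eq_sum_indicator:
  fixes \<theta> :: "'n::finite \<Rightarrow> nat"
  assumes "\<forall>j. \<theta> j \<in> {0, 1}"
  shows "haar \<theta> (\<chi> j. 2 ^ n * t $ j - of_int (\<alpha> j)) =
    (\<Sum>S\<in>Pow {j. \<theta> j = 1}. (-1) ^ card S *
       indicator ((+) (shift_vec (1 / 2 ^ Suc n) S) ` haar_cell n \<theta> \<alpha>) t)"
proof -
  define T where "T = {j. \<theta> j = 1}"
  define y where "y j = 2 ^ n * t $ j - of_int (\<alpha> j)" for j
  define p :: "'n \<Rightarrow> real" where "p j = indicator {0..1/2} (y j)" for j
  define q :: "'n \<Rightarrow> real" where "q j = indicator {1/2..1} (y j)" for j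
  define r :: "'n \<Rightarrow> real" where "r j = indicator {0..1} (y j)" for j
  have "haar \<theta> (\<chi> j. 2 ^ n * t $ j - of_int (\<alpha> j)) = (\<Prod>j\<in>UNIV. if j \<in> T then p j - q j else r j)"
    unfolding haar_def
  proof (intro prod.cong refl)
    fix j
    show "haar1 (\<theta> j) ((\<chi> j. 2 ^ n * t $ j - of_int (\<alpha> j)) $ j) = (if j \<in> T then p j - q j else r j)"
      using assms[rule_format, of j] by (auto simp: haar1_def T_def p_def q_def r_def y_def)
  qed
  also have "\<dots> = (\<Prod>j\<in>T. p j - q j) * prod r (- T)"
    by (simp add: prod.If_cases Int_def Compl_eq)
  also have "\<dots> = (\<Sum>S\<in>Pow T. (-1) ^ card S * (prod q S * prod p (T - S) * prod r (- T)))"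
    by (simp add: prod_diff_conv_sum sum_distrib_right mult.assoc)
  also have "\<dots> = (\<Sum>S\<in>Pow T. (-1) ^ card S *
       indicator ((+) (shift_vec (1 / 2 ^ Suc n) S) ` haar_cell n \<theta> \<alpha>) t)"
  proof (intro sum.cong refl arg_cong2[where f = "(*)"])
    fix S assume "S \<in> Pow T"
    then have ST: "S \<subseteq> T" by simp
    have P: "(0::real) < 2 ^ n" by simp
    have "indicator ((+) (shift_vec (1 / 2 ^ Suc n) S) ` haar_cell n \<theta> \<alpha>) t
        = (\<Prod>j\<in>UNIV. if j \<in> S then q j else if j \<in> T then p j else r j)"
      unfolding haar_cell_def cbox_translation[symmetric] indicator_cbox_cart
      using ST P
      by (intro prod.cong refl)
        (auto simp: shift_vec_def T_def p_def q_def r_def y_def indicator_def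
          field_simps pos_divide_le_eq pos_le_divide_eq)
    then show "prod q S * prod p (T - S) * prod r (- T)
        = indicator ((+) (shift_vec (1 / 2 ^ Suc n) S) ` haar_cell n \<theta> \<alpha>) t"
      by (simp add: prod_nested_if[OF ST])
  qed
  finally show ?thesis unfolding T_def .
qed

lemma integral_translation_cbox:
  fixes f :: "'a::euclidean_space \<Rightarrow> 'b::euclidean_space"
  shows "integral ((+) c ` cbox a b) f = integral (cbox a b) (\<lambda>t. f (t + c))"
proof -
  have "(+) c ` cbox a b = cbox (a + c) (b + c)"
    by (metis add.commute cbox_translation)
  then show ?thesis
    using integral_shift_cbox_plus[of a b f c] by (simp add: o_def add.commute)
qed

lemma haar_coeff_eq_integral_iter_diff:
  fixes \<theta> :: "'n::finite \<Rightarrow> nat" and f :: "real^'n \<Rightarrow> real"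
  assumes "\<forall>j. \<theta> j \<in> {0, 1}" and f: "continuous_on UNIV f"
    and xs: "distinct xs" "set xs = {j. \<theta> j = 1}"
  shows "haar_coeff n \<theta> \<alpha> f = 2 powr (real n * real CARD('n) / 2) *
    integral (haar_cell n \<theta> \<alpha>) (iter_diff (1 / 2 ^ Suc n) xs f)"
proof -
  define h :: real where "h = 1 / 2 ^ Suc n"
  define B where "B S = (+) (shift_vec h S) ` haar_cell n \<theta> \<alpha>" for S
  obtain a b where cell: "haar_cell n \<theta> \<alpha> = cbox a b"
    by (simp add: haar_cell_def)
  have integrable: "(\<lambda>t. if t \<in> B S then f t else 0) integrable_on UNIV" for S
    unfolding B_def cell cbox_translation[symmetric] integrable_restrict_UNIV
    by (intro integrable_continuous continuous_on_subset[OF f]) simp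
  have shifted: "(\<lambda>t. f (t + c)) integrable_on cbox a b" for c
    by (intro integrable_continuous continuous_on_compose2[OF f] continuous_intros) auto
  have "integral UNIV (\<lambda>t. f t * haar \<theta> (\<chi> j. 2 ^ n * t $ j - of_int (\<alpha> j)))
      = integral UNIV (\<lambda>t. \<Sum>S\<in>Pow (set xs). (-1) ^ card S * (if t \<in> B S then f t else 0))"
    unfolding haar_scaled_eq_sum_indicator[OF assms(1)] xs(2) sum_distrib_left
    by (intro integral_cong sum.cong) (auto simp: B_def h_def indicator_def)
  also have "\<dots> = (\<Sum>S\<in>Pow (set xs). (-1) ^ card S * integral (B S) f)"
    using integrable by (simp add: integral_sum integral_restrict_UNIV)
  also have "\<dots> = (\<Sum>S\<in>Pow (set xs). integral (cbox a b) (\<lambda>t. (-1) ^ card S * f (t + shift_vec h S)))"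
    by (simp add: B_def cell integral_translation_cbox)
  also have "\<dots> = integral (cbox a b) (iter_diff h xs f)"
    unfolding iter_diff_eq_sum[OF xs(1), abs_def]
    by (rule integral_sum[symmetric]) (auto intro: integrable_on_mult_right shifted)
  finally show ?thesis
    by (simp add: haar_coeff_def cell h_def)
qed

lemma grid_pt_mem_haar_cell: "grid_pt n \<alpha> \<in> haar_cell n \<theta> \<alpha>"
  by (simp add: grid_pt_def haar_cell_def mem_box_cart divide_right_mono)

lemma measure_haar_cell:
  fixes \<theta> :: "'n::finite \<Rightarrow> nat"
  shows "measure lborel (haar_cell n \<theta> \<alpha>) = (1/2) ^ card {j. \<theta> j = 1} * (1 / 2 ^ n) ^ CARD('n)"
proof -
  have "haar_cell n \<theta> \<alpha> \<noteq> {}"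
    using grid_pt_mem_haar_cell by blast
  then have "measure lborel (haar_cell n \<theta> \<alpha>)
      = (\<Prod>j\<in>UNIV. (if \<theta> j = 1 then 1/2 else 1) * (1 / 2 ^ n :: real))"
    unfolding haar_cell_def by (simp add: content_cbox_cart add_divide_distrib)
  also have "\<dots> = (1/2) ^ card {j. \<theta> j = 1} * (1 / 2 ^ n) ^ CARD('n)"
    by (simp only: prod.distrib prod_constant) (simp add: prod.If_cases)
  finally show ?thesis .
qed

lemma norm_le_of_mem_haar_cell:
  fixes t :: "real^'n::finite"
  assumes "t \<in> haar_cell n \<theta> \<alpha>"
  shows "norm t \<le> (\<Sum>j\<in>UNIV. \<bar>of_int (\<alpha> j)\<bar> + 1) / 2 ^ n"
proof -
  have "\<bar>t $ j\<bar> \<le> (\<bar>of_int (\<alpha> j)\<bar> + 1) / 2 ^ n" for j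
  proof -
    have "of_int (\<alpha> j) / 2 ^ n \<le> t $ j"
      and "t $ j \<le> (of_int (\<alpha> j) + (if \<theta> j = 1 then 1/2 else 1)) / 2 ^ n"
      using assms unfolding haar_cell_def mem_box_cart by auto
    moreover have "(of_int (\<alpha> j) + (if \<theta> j = 1 then 1/2 else 1)) / 2 ^ n \<le> (of_int (\<alpha> j) + 1) / (2 ^ n :: real)"
      by (simp add: divide_right_mono)
    ultimately have "of_int (\<alpha> j) / 2 ^ n \<le> t $ j" "t $ j \<le> (of_int (\<alpha> j) + 1) / 2 ^ n"
      by linarith+
    then have "of_int (\<alpha> j) \<le> t $ j * 2 ^ n" "t $ j * 2 ^ n \<le> of_int (\<alpha> j) + 1"
      by (simp_all add: pos_divide_le_eq pos_le_divide_eq)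
    then have "\<bar>t $ j\<bar> * 2 ^ n \<le> \<bar>of_int (\<alpha> j)\<bar> + 1"
      by (simp add: abs_if)
    then show ?thesis
      by (simp add: pos_le_divide_eq)
  qed
  then have "(\<Sum>j\<in>UNIV. \<bar>t $ j\<bar>) \<le> (\<Sum>j\<in>UNIV. \<bar>of_int (\<alpha> j)\<bar> + 1) / 2 ^ n"
    by (simp add: sum_divide_distrib sum_mono)
  then show ?thesis using norm_le_l1_cart[of t] by linarith
qed

lemma integral_average_bound:
  fixes g :: "'a::euclidean_space \<Rightarrow> real"
  assumes "g integrable_on cbox a b" and pos: "measure lborel (cbox a b) > 0"
    and "\<And>t. t \<in> cbox a b \<Longrightarrow> \<bar>g t - L\<bar> \<le> e"
  shows "\<bar>integral (cbox a b) g / measure lborel (cbox a b) - L\<bar> \<le> e"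
proof -
  define M where "M = measure lborel (cbox a b)"
  obtain t0 where "t0 \<in> cbox a b"
    using pos by fastforce
  then have "e \<ge> 0"
    using assms(3) by force
  have "((\<lambda>t. g t - L) has_integral integral (cbox a b) g - M *\<^sub>R L) (cbox a b)"
    unfolding M_def by (rule has_integral_diff[OF integrable_integral[OF assms(1)] has_integral_const])
  then have "norm (integral (cbox a b) g - M *\<^sub>R L) \<le> e * M"
    unfolding M_def by (rule has_integral_bound[OF \<open>e \<ge> 0\<close>]) (simp add: assms(3))
  moreover have "integral (cbox a b) g / M - L = (integral (cbox a b) g - M * L) / M"
    using pos by (simp add: M_def diff_divide_distrib)
  ultimately show ?thesis
    using pos by (simp add: M_def abs_divide pos_divide_le_eq)
qed

definition haar_cell_average ::
    "nat \<Rightarrow> ('n::finite \<Rightarrow> nat) \<Rightarrow> ('n \<Rightarrow> int) \<Rightarrow> 'n list \<Rightarrow> (real^'n \<Rightarrow> real) \<Rightarrow> real" where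
  "haar_cell_average n \<theta> \<alpha> xs f =
     integral (haar_cell n \<theta> \<alpha>)
       (\<lambda>t. iter_diff (1 / 2 ^ Suc n) xs f t / (- (1 / 2 ^ Suc n)) ^ length xs)
     / measure lborel (haar_cell n \<theta> \<alpha>)"

lemma haar_cell_diff_quotient_uniformly_close:
  fixes f :: "real^'n::finite \<Rightarrow> real" and \<theta> :: "'n \<Rightarrow> nat"
  assumes f: "Ck m f" and xs: "length xs \<le> m" and "\<epsilon> > 0"
  shows "\<forall>\<^sub>F n in sequentially. \<forall>t \<in> haar_cell n \<theta> \<alpha>.
    \<bar>iter_diff (1 / 2 ^ Suc n) xs f t / (- (1 / 2 ^ Suc n)) ^ length xs - foldr partial_deriv xs f 0\<bar> < \<epsilon>"
proof -
  define D where "D = foldr partial_deriv xs f"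
  define k where "k = length xs"
  define C where "C = (\<Sum>j\<in>UNIV. \<bar>of_int (\<alpha> j)\<bar> + 1 :: real)"
  have "isCont D 0"
    using continuous_on_foldr_partial_deriv[OF f xs]
    by (simp add: D_def continuous_on_eq_continuous_at)
  then have "\<exists>r>0. \<forall>y. dist y 0 < r \<longrightarrow> dist (D y) (D 0) < \<epsilon>"
    using \<open>\<epsilon> > 0\<close> unfolding continuous_at_eps_delta by blast
  then obtain r where "r > 0" and r: "\<And>y. norm y < r \<Longrightarrow> \<bar>D y - D 0\<bar> < \<epsilon>"
    by (auto simp: dist_norm)
  obtain N where N: "(C + k) / r < 2 ^ N"
    using real_arch_pow[of 2] by auto
  have "C \<ge> 0" unfolding C_def by (intro sum_nonneg) auto
  show ?thesis
  proof (rule eventually_sequentiallyI[of N], intro ballI)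
    fix n t assume "N \<le> n" and t: "t \<in> haar_cell n \<theta> \<alpha>"
    define h :: real where "h = 1 / 2 ^ Suc n"
    have "h > 0" by (simp add: h_def)
    obtain \<xi> where \<xi>: "norm (\<xi> - t) \<le> k * h" and eq: "iter_diff h xs f t = (-h) ^ k * D \<xi>"
      using iter_diff_mean_value[OF \<open>h > 0\<close> f xs] by (auto simp: D_def k_def)
    have "norm \<xi> \<le> norm t + norm (\<xi> - t)"
      by (rule norm_triangle_sub)
    also have "\<dots> \<le> C / 2 ^ n + k * (1 / 2 ^ n)"
    proof (rule add_mono)
      show "norm t \<le> C / 2 ^ n"
        using norm_le_of_mem_haar_cell[OF t] by (simp add: C_def)
      have "h \<le> 1 / 2 ^ n"
        unfolding h_def by (intro divide_left_mono) auto
      then show "norm (\<xi> - t) \<le> k * (1 / 2 ^ n)"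
        using \<xi> by (meson mult_left_mono of_nat_0_le_iff order_trans)
    qed
    also have "\<dots> \<le> (C + k) / 2 ^ N"
      using \<open>C \<ge> 0\<close> \<open>N \<le> n\<close> unfolding add_divide_distrib[symmetric] times_divide_eq_right mult_1_right
      by (intro divide_left_mono) (auto intro: power_increasing)
    also have "\<dots> < r"
      using N \<open>r > 0\<close> by (simp add: pos_divide_less_eq mult.commute)
    finally have "norm \<xi> < r" .
    moreover have "iter_diff h xs f t / (-h) ^ k = D \<xi>"
      using eq \<open>h > 0\<close> by simp
    ultimately have "\<bar>iter_diff h xs f t / (-h) ^ k - D 0\<bar> < \<epsilon>"
      using r by simp
    then show "\<bar>iter_diff (1 / 2 ^ Suc n) xs f t / (- (1 / 2 ^ Suc n)) ^ length xs
        - foldr partial_deriv xs f 0\<bar> < \<epsilon>"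
      by (simp add: h_def k_def D_def)
  qed
qed

lemma haar_cell_average_tendsto:
  fixes f :: "real^'n::finite \<Rightarrow> real" and \<theta> :: "'n \<Rightarrow> nat"
  assumes f: "Ck m f" and xs: "length xs \<le> m"
  shows "(\<lambda>n. haar_cell_average n \<theta> \<alpha> xs f) \<longlonglongrightarrow> foldr partial_deriv xs f 0"
proof (rule LIMSEQ_I)
  fix \<epsilon> :: real
  assume "\<epsilon> > 0"
  then obtain N where N: "\<And>n t. N \<le> n \<Longrightarrow> t \<in> haar_cell n \<theta> \<alpha> \<Longrightarrow>
      \<bar>iter_diff (1 / 2 ^ Suc n) xs f t / (- (1 / 2 ^ Suc n)) ^ length xs
        - foldr partial_deriv xs f 0\<bar> < \<epsilon> / 2"
    using haar_cell_diff_quotient_uniformly_close[OF f xs, of "\<epsilon> / 2" \<theta> \<alpha>]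
    unfolding eventually_sequentially by auto
  show "\<exists>N. \<forall>n\<ge>N. norm (haar_cell_average n \<theta> \<alpha> xs f - foldr partial_deriv xs f 0) < \<epsilon>"
  proof (intro exI allI impI)
    fix n assume "N \<le> n"
    obtain a b where cell: "haar_cell n \<theta> \<alpha> = cbox a b"
      by (simp add: haar_cell_def)
    have "continuous_on UNIV (\<lambda>t. iter_diff (1 / 2 ^ Suc n) xs f t / (- (1 / 2 ^ Suc n)) ^ length xs)"
      using continuous_on_iter_diff[OF Ck_imp_continuous_on[OF f]] by (intro continuous_intros) auto
    then have "(\<lambda>t. iter_diff (1 / 2 ^ Suc n) xs f t / (- (1 / 2 ^ Suc n)) ^ length xs)
        integrable_on cbox a b"
      by (meson continuous_on_subset integrable_continuous subset_UNIV)
    then have "\<bar>haar_cell_average n \<theta> \<alpha> xs f - foldr partial_deriv xs f 0\<bar> \<le> \<epsilon> / 2"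
      unfolding haar_cell_average_def cell
      by (rule integral_average_bound)
        (use measure_haar_cell[of n \<theta> \<alpha>] N[OF \<open>N \<le> n\<close>] in \<open>auto simp: cell less_imp_le\<close>)
    then show "norm (haar_cell_average n \<theta> \<alpha> xs f - foldr partial_deriv xs f 0) < \<epsilon>"
      using \<open>\<epsilon> > 0\<close> by simp
  qed
qed

lemma sum_zero_one_eq_card:
  assumes "\<forall>j. \<theta> j \<in> {0, 1::nat}"
  shows "sum \<theta> UNIV = card {j::'n::finite. \<theta> j = 1}"
proof -
  have "sum \<theta> UNIV = (\<Sum>j\<in>UNIV. if \<theta> j = 1 then 1 else 0)"
    by (rule sum.cong) (use assms in auto)
  then show ?thesis by (simp add: sum.If_cases)
qed

lemma scaled_haar_coeff_eq_haar_cell_average: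
  fixes \<theta> :: "'n::finite \<Rightarrow> nat" and f :: "real^'n \<Rightarrow> real"
  assumes \<theta>: "\<forall>j. \<theta> j \<in> {0, 1}" and f: "continuous_on UNIV f"
    and xs: "distinct xs" "set xs = {j. \<theta> j = 1}"
  shows "(-1) ^ sum \<theta> UNIV
           * 2 powr ((real n + 2) * real (sum \<theta> UNIV) + real n * real CARD('n) / 2)
           * haar_coeff n \<theta> \<alpha> f
       = haar_cell_average n \<theta> \<alpha> xs f"
proof -
  define k where "k = length xs"
  define s where "s = CARD('n)"
  define I where "I = integral (haar_cell n \<theta> \<alpha>) (iter_diff (1 / 2 ^ Suc n) xs f)"
  have k: "sum \<theta> UNIV = k" "card {j. \<theta> j = 1} = k"
    using sum_zero_one_eq_card[OF \<theta>] distinct_card[OF xs(1)] xs(2) by (simp_all add: k_def)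
  have "2 powr ((real n + 2) * real k + real n * real s / 2) * 2 powr (real n * real s / 2)
      = (2::real) powr real ((n + 2) * k + n * s)"
    by (simp add: powr_add[symmetric] algebra_simps)
  also have "\<dots> = 2 ^ ((n + 2) * k + n * s)"
    by (rule powr_realpow) simp
  also have "(n + 2) * k + n * s = Suc n * k + k + n * s"
    by simp
  also have "(2::real) ^ \<dots> = 2 ^ (Suc n * k) * 2 ^ k * (2 ^ n) ^ s"
    by (simp only: power_add power_mult)
  finally have scale: "2 powr ((real n + 2) * real k + real n * real s / 2) * 2 powr (real n * real s / 2)
      = 2 ^ (Suc n * k) * 2 ^ k * (2 ^ n) ^ s" .
  have step: "(- (1 / 2 ^ Suc n)) ^ k = (-1) ^ k / (2::real) ^ (Suc n * k)"
    unfolding power_minus[of "1 / 2 ^ Suc n"] power_mult power_divide by simp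
  have cell: "(1/2) ^ k * (1 / 2 ^ n) ^ s = 1 / ((2::real) ^ k * (2 ^ n) ^ s)"
    by (simp add: power_one_over)
  have sign: "1 / (-1::real) ^ k = (-1) ^ k"
    by (cases "even k") auto
  have "(-1) ^ sum \<theta> UNIV
           * 2 powr ((real n + 2) * real (sum \<theta> UNIV) + real n * real CARD('n) / 2)
           * haar_coeff n \<theta> \<alpha> f
      = (-1) ^ k * (2 powr ((real n + 2) * real k + real n * real s / 2) * 2 powr (real n * real s / 2)) * I"
    by (simp only: haar_coeff_eq_integral_iter_diff[OF \<theta> f xs] k(1) I_def s_def mult.assoc)
  also have "\<dots> = I * (1 / (-1) ^ k) * 2 ^ (Suc n * k) * (2 ^ k * (2 ^ n) ^ s)"
    unfolding scale sign by (simp only: ac_simps)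
  also have "\<dots> = I / (- (1 / 2 ^ Suc n)) ^ k / ((1/2) ^ k * (1 / 2 ^ n) ^ s)"
    unfolding step cell by simp
  finally show ?thesis
    unfolding haar_cell_average_def measure_haar_cell k(2) by (simp add: I_def k_def s_def)
qed

lemma grid_pt_tendsto_zero: "(\<lambda>n. grid_pt n \<alpha>) \<longlonglongrightarrow> 0"
proof -
  have "grid_pt n \<alpha> = (1/2) ^ n *\<^sub>R (\<chi> j. (of_int (\<alpha> j) + 1/2 :: real))" for n
    by (vector grid_pt_def power_one_over)
  moreover have "(\<lambda>n. (1/2::real) ^ n *\<^sub>R (\<chi> j. (of_int (\<alpha> j) + 1/2 :: real))) \<longlonglongrightarrow> 0"
    using tendsto_scaleR[OF LIMSEQ_realpow_zero[of "1/2"] tendsto_const] by simp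
  ultimately show ?thesis by simp
qed

theorem theorem3p2:
  fixes \<theta> :: "'n::finite \<Rightarrow> nat" and f :: "real^'n \<Rightarrow> real" and \<alpha> :: "'n \<Rightarrow> int"
  assumes "\<forall>j. \<theta> j \<in> {0, 1}"
    and "Ck (sum \<theta> UNIV + 1) f"
  shows "(\<lambda>n. \<bar>(-1) ^ sum \<theta> UNIV
              * 2 powr ((real n + 2) * real (sum \<theta> UNIV) + real n * real CARD('n) / 2)
              * haar_coeff n \<theta> \<alpha> f
            - D_theta \<theta> f (grid_pt n \<alpha>) / real (\<Prod>j\<in>UNIV. fact (\<theta> j))\<bar>)
         \<longlonglongrightarrow> 0"
proof -
  define xs where "xs = (SOME xs. distinct xs \<and> set xs = {j. \<theta> j = 1})"
  have xs: "distinct xs" "set xs = {j. \<theta> j = 1}"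
    unfolding xs_def by (metis (mono_tags, lifting) finite_distinct_list finite someI_ex)+
  define D where "D = foldr partial_deriv xs f"
  have "length xs \<le> sum \<theta> UNIV + 1"
    using sum_zero_one_eq_card[OF assms(1)] distinct_card[OF xs(1)] xs(2) by simp
  note f = assms(2) this
  have "(\<Prod>j\<in>UNIV. fact (\<theta> j)) = (1::nat)"
    using assms(1) by (intro prod.neutral) (metis fact_0 fact_1 insertE singletonD)
  then have D_theta: "D_theta \<theta> f x / real (\<Prod>j\<in>UNIV. fact (\<theta> j)) = D x" for x
    by (simp add: D_theta_def D_def xs_def)
  have "isCont D 0"
    using continuous_on_foldr_partial_deriv[OF f]
    by (simp add: D_def continuous_on_eq_continuous_at)
  then have "(\<lambda>n. D (grid_pt n \<alpha>)) \<longlonglongrightarrow> D 0"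
    using grid_pt_tendsto_zero isCont_tendsto_compose by blast
  from tendsto_rabs[OF tendsto_diff[OF haar_cell_average_tendsto[OF f] this]]
  show ?thesis
    unfolding scaled_haar_coeff_eq_haar_cell_average[OF assms(1) Ck_imp_continuous_on[OF assms(2)] xs]
      D_theta D_def by simp
qed

end
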